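(* Let $D\ge 1$. If there is a $\bar{D}$-separable block design (multiset) $\mathcal{F}$ with $N$ blocks on vertex set $[T]$, then there exists a $(T,N,D)$-tropical code within maximum delay $0$; namely, with a bijection $j:\mathcal{F}\to[N]$, the matrix $S_{t,j(B)}=0$ if $t\in B$ and $S_{t,j(B)}=\infty$ if $t\notin B$ is such a code.
   Context: Tropical arithmetic on $\mathbb{R}\cup\{\infty\}$: $x\oplus y=\min(x,y)$, $x\odot y=x+y$, with $x\oplus\infty=x$ and $x\odot\infty=\infty$. For a matrix $S$ with $T$ rows and $N$ columns and a column vector $\mathbf{x}$ of length $N$, $S\odot\mathbf{x}$ is the vector whose $t$-th entry is $\min_{j}(S_{tj}+x_j)$. A $(T,N,D)$-tropical code is a matrix $S\in(\{0\}\cup\mathbb{N}\cup\{\infty\})^{T\times N}$ such that for any two distinct vectors $\mathbf{x},\mathbf{y}\in(\{0\}\cup\mathbb{N}\cup\{\infty\})^{N}$, each having at most $D$ finite entries, $S\odot\mathbf{x}\ne S\odot\mathbf{y}$. It is within maximum delay $\ell$ if $S\in\{0,1,\dots,\ell,\infty\}^{T\times N}$. A block design here is a multiset $\mathcal{F}$ of subsets of $[T]$ whose elements (blocks) are individually indexed; it is $\bar{D}$-separable if for any two different subcollections $\{Z_1,\dots,Z_r\}\ne\{B_1,\dots,B_s\}$ of at most $D$ blocks each (different as collections of indexed blocks, $r,s\le D$), $Z_1\cup\dots\cup Z_r\ne B_1\cup\dots\cup B_s$. *)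

theory Defs
  imports Main
begin

(* Tropical semiring on {0,1,2,...} \<union> {\<infinity>}: a value is a nat option, None = \<infinity>. *)

fun tplus :: "nat option \<Rightarrow> nat option \<Rightarrow> nat option" (* tropical product x \<odot> y = x + y *)
  where "tplus (Some a) (Some b) = Some (a + b)"
      | "tplus _ _ = None"

definition tsum :: "nat option set \<Rightarrow> nat option" where
  "tsum A = (if \<exists>a. Some a \<in> A then Some (Min {a. Some a \<in> A}) else None)"

(* matrices: S t j for rows t < T and columns j < N; vectors x j for j < N *)
definition trop_mv :: "nat \<Rightarrow> (nat \<Rightarrow> nat \<Rightarrow> nat option) \<Rightarrow> (nat \<Rightarrow> nat option) \<Rightarrow> nat \<Rightarrow> nat option" where
  "trop_mv N S x t = tsum ((\<lambda>j. tplus (S t j) (x j)) ` {..<N})"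

definition num_finite :: "nat \<Rightarrow> (nat \<Rightarrow> nat option) \<Rightarrow> nat" where
  "num_finite N x = card {j \<in> {..<N}. x j \<noteq> None}"

definition tropical_code :: "nat \<Rightarrow> nat \<Rightarrow> nat \<Rightarrow> (nat \<Rightarrow> nat \<Rightarrow> nat option) \<Rightarrow> bool" where
  "tropical_code T N D S \<longleftrightarrow>
     (\<forall>x y. num_finite N x \<le> D \<longrightarrow> num_finite N y \<le> D \<longrightarrow>
        (\<exists>j<N. x j \<noteq> y j) \<longrightarrow> (\<exists>t<T. trop_mv N S x t \<noteq> trop_mv N S y t))"

definition within_delay :: "nat \<Rightarrow> nat \<Rightarrow> nat \<Rightarrow> (nat \<Rightarrow> nat \<Rightarrow> nat option) \<Rightarrow> bool" where
  "within_delay T N l S \<longleftrightarrow> (\<forall>t<T. \<forall>j<N. \<forall>a. S t j = Some a \<longrightarrow> a \<le> l)"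

(* An indexed block design with N blocks B 0, ..., B (N-1) on vertex set [T] = {0..<T}
   (multiset: blocks may coincide but are distinguished by their index). *)
definition block_design :: "nat \<Rightarrow> nat \<Rightarrow> (nat \<Rightarrow> nat set) \<Rightarrow> bool" where
  "block_design T N B \<longleftrightarrow> (\<forall>j<N. B j \<subseteq> {..<T})"

definition separable :: "nat \<Rightarrow> nat \<Rightarrow> (nat \<Rightarrow> nat set) \<Rightarrow> bool" where
  "separable N D B \<longleftrightarrow>
     (\<forall>I J. I \<subseteq> {..<N} \<longrightarrow> J \<subseteq> {..<N} \<longrightarrow> card I \<le> D \<longrightarrow> card J \<le> D \<longrightarrow> I \<noteq> J \<longrightarrow>
        \<Union>(B ` I) \<noteq> \<Union>(B ` J))"

end

theory Submission
  imports Defs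
begin

text \<open>Feeding the vector x through the 0/\<infinity> incidence matrix of the blocks, coordinate t is
  \<infinity> unless t lies in a block of the support of x, and equals x j when B j is the only block of
  the support containing t. So the union of the support blocks is visible in the output, and by
  separability it determines the support; inside a support of at most D blocks every block has a
  private vertex (drop the block, the union must change), at which its value is read off.\<close>

definition incidence_matrix :: "(nat \<Rightarrow> nat set) \<Rightarrow> nat \<Rightarrow> nat \<Rightarrow> nat option" where
  "incidence_matrix B t j = (if t \<in> B j then Some 0 else None)"

definition support :: "nat \<Rightarrow> (nat \<Rightarrow> nat option) \<Rightarrow> nat set" where
  "support N x = {j \<in> {..<N}. x j \<noteq> None}"

lemma support_subset: "support N x \<subseteq> {..<N}"
  unfolding support_def by blast

lemma num_finite_eq_card_support: "num_finite N x = card (support N x)"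
  unfolding num_finite_def support_def ..

lemma tsum_eq_None_iff: "tsum A = None \<longleftrightarrow> A \<subseteq> {None}"
  unfolding tsum_def by (auto simp: subset_singleton_iff) (metis not_None_eq)

lemma tsum_Diff_None: "tsum (A - {None}) = tsum A"
  unfolding tsum_def by simp

lemma tsum_singleton_Some: "tsum {Some a} = Some a"
  unfolding tsum_def by simp

lemma tplus_incidence_matrix:
  "tplus (incidence_matrix B t j) v = (if t \<in> B j then v else None)"
  unfolding incidence_matrix_def by (cases v) auto

lemma trop_mv_incidence_matrix:
  "trop_mv N (incidence_matrix B) x t = tsum (x ` {j \<in> support N x. t \<in> B j})"
proof -
  have "(\<lambda>j. tplus (incidence_matrix B t j) (x j)) ` {..<N} - {None}
      = x ` {j \<in> support N x. t \<in> B j}"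
    unfolding tplus_incidence_matrix support_def by (auto simp: image_iff)
  then show ?thesis
    unfolding trop_mv_def by (metis tsum_Diff_None)
qed

lemma trop_mv_incidence_matrix_eq_None_iff:
  "trop_mv N (incidence_matrix B) x t = None \<longleftrightarrow> t \<notin> \<Union>(B ` support N x)"
  unfolding trop_mv_incidence_matrix tsum_eq_None_iff by (auto simp: support_def image_subset_iff)

lemma trop_mv_incidence_matrix_private:
  assumes "j \<in> support N x" "t \<in> B j" "\<forall>i \<in> support N x - {j}. t \<notin> B i"
  shows "trop_mv N (incidence_matrix B) x t = x j"
proof -
  have "{i \<in> support N x. t \<in> B i} = {j}" using assms by auto
  moreover obtain a where "x j = Some a" using assms(1) by (auto simp: support_def)
  ultimately show ?thesis
    unfolding trop_mv_incidence_matrix by (simp add: tsum_singleton_Some)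
qed

lemma separableD:
  assumes "separable N D B" "I \<subseteq> {..<N}" "J \<subseteq> {..<N}" "card I \<le> D" "card J \<le> D"
    and "\<Union>(B ` I) = \<Union>(B ` J)"
  shows "I = J"
  using assms unfolding separable_def by blast

lemma separable_private_vertex:
  assumes "separable N D B" "I \<subseteq> {..<N}" "card I \<le> D" "j \<in> I"
  shows "\<exists>t \<in> B j. \<forall>i \<in> I - {j}. t \<notin> B i"
proof (rule ccontr)
  assume "\<not> ?thesis"
  then have "\<Union>(B ` (I - {j})) = \<Union>(B ` I)" using assms(4) by blast
  moreover have "I - {j} \<subseteq> {..<N}" using assms(2) by blast
  moreover have "card (I - {j}) \<le> D" using assms(3) card_Diff1_le[of I j] by linarith
  ultimately have "I - {j} = I" using separableD[OF assms(1) _ assms(2) _ assms(3)] by blast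
  with assms(4) show False by blast
qed

lemma tropical_code_incidence_matrix:
  assumes design: "block_design T N B" and sep: "separable N D B"
  shows "tropical_code T N D (incidence_matrix B)"
  unfolding tropical_code_def num_finite_eq_card_support
proof (intro allI impI)
  fix x y :: "nat \<Rightarrow> nat option"
  let ?S = "incidence_matrix B"
  assume x: "card (support N x) \<le> D" and y: "card (support N y) \<le> D" and "\<exists>j<N. x j \<noteq> y j"
  then obtain j where j: "j < N" "x j \<noteq> y j" by blast
  have blocks: "\<Union>(B ` support N z) \<subseteq> {..<T}" for z
    using design unfolding block_design_def support_def by auto
  show "\<exists>t<T. trop_mv N ?S x t \<noteq> trop_mv N ?S y t"
  proof (cases "support N x = support N y")
    case False
    then have "\<Union>(B ` support N x) \<noteq> \<Union>(B ` support N y)"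
      using separableD[OF sep support_subset support_subset x y] by blast
    then obtain t where t: "t \<in> \<Union>(B ` support N x) \<longleftrightarrow> t \<notin> \<Union>(B ` support N y)"
      by blast
    then have "t < T" using blocks by blast
    moreover have "trop_mv N ?S x t = None \<longleftrightarrow> trop_mv N ?S y t \<noteq> None"
      unfolding trop_mv_incidence_matrix_eq_None_iff using t by blast
    ultimately show ?thesis by auto
  next
    case True
    have j_supp: "j \<in> support N x" using j True by (auto simp: support_def)
    then obtain t where t: "t \<in> B j" "\<forall>i \<in> support N x - {j}. t \<notin> B i"
      using separable_private_vertex[OF sep support_subset x] by blast
    have "t < T" using blocks t(1) j_supp by blast
    moreover have "trop_mv N ?S x t = x j"
      using trop_mv_incidence_matrix_private[OF j_supp t] .
    moreover have "trop_mv N ?S y t = y j"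
      using trop_mv_incidence_matrix_private[of j N y t B] j_supp t True by simp
    ultimately show ?thesis using j(2) by auto
  qed
qed

theorem mainTheorem11:
  fixes T N D :: nat and B :: "nat \<Rightarrow> nat set"
  assumes "D \<ge> 1"
    and "block_design T N B"
    and "separable N D B"
  shows "tropical_code T N D (\<lambda>t j. if t \<in> B j then Some 0 else None)
       \<and> within_delay T N 0 (\<lambda>t j. if t \<in> B j then Some 0 else None)"
proof -
  have S: "(\<lambda>t j. if t \<in> B j then Some 0 else None) = incidence_matrix B"
    by (simp add: fun_eq_iff incidence_matrix_def)
  have "within_delay T N 0 (incidence_matrix B)"
    unfolding within_delay_def incidence_matrix_def by auto
  with tropical_code_incidence_matrix[OF assms(2,3)] show ?thesis
    unfolding S by blast
qed

end
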